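(* Let $\Sigma$ be an $(m,n)$-multirate system with harmonic transfer function $\mathcal G$, let $\mathcal A:=\mathcal T_{m\overline n}(A)$, and for $z\in\rho_{m\overline n}(\mathcal A)$ denote by $G_k(z)$ the operator in row $k$ and column $0$ of the $m\times n$ block operator matrix $\mathcal G(z)$. \begin{enumerate} \item With $\epsilon:=e^{2\pi j/(m\overline n)}$, for every $z\in\rho_{m\overline n}(\mathcal A)$ the entry of $\mathcal G(z)$ in row $k$ and column $\ell$ ($0\le k<m$, $0\le \ell<n$) equals $G_{(k-\ell)\bmod m}(z/\epsilon^\ell)$. \item Suppose $\Sigma$ is also $(\widetilde m,\widetilde n)$-multirate, where $\widetilde m=\widetilde c\,\overline m$, $\widetilde n=\widetilde c\,\overline n$ with $q:=c/\widetilde c\in\mathbb Z^+$ (i.e. the operators $A_t,B_t,C_t,D_t$ are $\widetilde m\overline n$-periodic), and let $\widetilde{\mathcal G}$ be the harmonic transfer function of $\Sigma$ regarded as an $(\widetilde m,\widetilde n)$-multirate system, defined on $\rho_{\widetilde m\overline n}(\widetilde{\mathcal A})$ with $\widetilde{\mathcal A}:=\mathcal T_{\widetilde m\overline n}(A)$. Then $\rho_{m\overline n}(\mathcal A)\subset\rho_{\widetilde m\overline n}(\widetilde{\mathcal A})$, and for all $z\in\rho_{m\overline n}(\mathcal A)$ we have $\mathcal G(z)\uparrow_q=\uparrow_q\widetilde{\mathcal G}(z)$ and in particular $\widetilde{\mathcal G}(z)=\downarrow_q\mathcal G(z)\uparrow_q$. \end{enumerate}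
   Context: $j$ is the imaginary unit; $U,X,Y$ are separable complex Hilbert spaces. Upsampler $(\uparrow_q v)_t=v_{t/q}$ if $q\mid t$, else $0$; downsampler $(\downarrow_q v)_t=v_{qt}$; on finite columns $\uparrow_q:V^N\to V^{qN}$ places entries at positions $0,q,2q,\dots$ (zeros elsewhere) and $\downarrow_q:V^{qN}\to V^N$ keeps positions $0,q,2q,\dots$. For $m,n\in\mathbb Z^+$, $c=\gcd(m,n)$, $\overline m=m/c$, $\overline n=n/c$. An $(m,n)$-multirate system consists of $m\overline n$-periodic bounded operator sequences $A_t:X\to X$, $B_t:U\to X$, $C_t:X\to Y$, $D_t:U\to Y$ with equations $x_{t+1}=A_tx_t+B_tu^\circ_t$, $y^\circ_t=C_tx_t+D_tu^\circ_t$, $u^\circ=\uparrow_{\overline m}u$, $y=\downarrow_{\overline n}y^\circ$. For a $T$-periodic sequence $A_t$: $\widehat A_k=\frac1T\sum_{t=0}^{T-1}A_te^{-2\pi jtk/T}$; $\mathcal T_T(A)$ is the $T\times T$ block matrix with entry $\widehat A_{(r-\ell)\bmod T}$ in row $r$, column $\ell$. $\mathcal N_T:=\mathrm{diag}(e^{2\pi jk/T}I)_{k=0}^{T-1}$, $\rho_T(\mathcal A):=\{z: \mathcal N_T-z\mathcal A$ has a bounded inverse$\}$. $\Pi_{T,1,q}:V^T\to V^{qT}$ stacks $q$ copies: $(\Pi_{T,1,q}v)_{t+kT}=v_t$; $\Pi_{T,1,q}^*:V^{qT}\to V^T$, $(\Pi^*_{T,1,q}v)_t=\sum_{k=0}^{q-1}v_{t+kT}$.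 The harmonic transfer function of an $(m,n)$-multirate system is, for $z\in\rho_{m\overline n}(\mathcal T_{m\overline n}(A))$, $\mathcal G(z):=\Pi_{m,1,\overline n}^*\big(z\mathcal C(\mathcal N_{m\overline n}-z\mathcal A)^{-1}\mathcal B+\mathcal D\big)\Pi_{n,1,\overline m}/\overline m:U^n\to Y^m$, where $\mathcal A,\mathcal B,\mathcal C,\mathcal D$ are the Toeplitz transforms with period $m\overline n$ of $A,B,C,D$. For the $(\widetilde m,\widetilde n)$ version, all $m,n$ are replaced by $\widetilde m,\widetilde n$ and the period $m\overline n$ by $\widetilde m\overline n$. *)

theory Defs
  imports "HOL-Analysis.Analysis"
begin

class cvector = real_vector +
  fixes scaleC :: "complex \<Rightarrow> 'a \<Rightarrow> 'a"
  assumes scaleC_add_right: "scaleC a (x + y) = scaleC a x + scaleC a y"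
    and scaleC_add_left: "scaleC (a + b) x = scaleC a x + scaleC b x"
    and scaleC_scaleC: "scaleC a (scaleC b x) = scaleC (a * b) x"
    and scaleC_one: "scaleC 1 x = x"
    and scaleC_of_real: "scaleC (complex_of_real r) x = scaleR r x"

class chilbert = cvector + real_normed_vector + complete_space +
  fixes cinner :: "'a \<Rightarrow> 'a \<Rightarrow> complex"
  assumes cinner_commute: "cinner x y = cnj (cinner y x)"
    and cinner_add_left: "cinner (x + y) z = cinner x z + cinner y z"
    and cinner_scaleC_left: "cinner (scaleC r x) y = cnj r * cinner x y"
    and cinner_ge_zero: "Im (cinner x x) = 0 \<and> Re (cinner x x) \<ge> 0"
    and cinner_eq_zero_iff: "cinner x x = 0 \<longleftrightarrow> x = 0"
    and norm_eq_sqrt_cinner: "norm x = sqrt (Re (cinner x x))"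

text \<open>Separability of the Hilbert spaces is expressed by the class
  second_countable_topology (for metric spaces: separable iff second countable).\<close>

definition bcl :: "('a::chilbert \<Rightarrow> 'b::chilbert) \<Rightarrow> bool" where
  "bcl f \<longleftrightarrow> bounded_linear f \<and> (\<forall>c x. f (scaleC c x) = scaleC c (f x))"

text \<open>A block operator matrix is given by its entries (row, column); only the
  entries with indices below the stated dimensions are relevant.\<close>

type_synonym ('a, 'b) bmat = "nat \<Rightarrow> nat \<Rightarrow> 'a \<Rightarrow> 'b"

definition bmult :: "nat \<Rightarrow> ('b::chilbert, 'c::chilbert) bmat \<Rightarrow> ('a, 'b) bmat \<Rightarrow> ('a, 'c) bmat" where
  "bmult p M N = (\<lambda>r l x. \<Sum>k<p. M r k (N k l x))"

definition badd :: "('a, 'b::chilbert) bmat \<Rightarrow> ('a, 'b) bmat \<Rightarrow> ('a, 'b) bmat" where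
  "badd M N = (\<lambda>r l x. M r l x + N r l x)"

definition bminus :: "('a, 'b::chilbert) bmat \<Rightarrow> ('a, 'b) bmat \<Rightarrow> ('a, 'b) bmat" where
  "bminus M N = (\<lambda>r l x. M r l x - N r l x)"

definition bscale :: "complex \<Rightarrow> ('a, 'b::chilbert) bmat \<Rightarrow> ('a, 'b) bmat" where
  "bscale a M = (\<lambda>r l x. scaleC a (M r l x))"

definition bid :: "('a::chilbert, 'a) bmat" where
  "bid = (\<lambda>r l x. if r = l then x else 0)"

definition beq :: "nat \<Rightarrow> nat \<Rightarrow> ('a, 'b) bmat \<Rightarrow> ('a, 'b) bmat \<Rightarrow> bool" where
  "beq nr nc M N \<longleftrightarrow> (\<forall>r<nr. \<forall>l<nc. M r l = N r l)"

text \<open>R is a bounded inverse of the T x T block operator matrix M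
  (bounded operators on X^T are exactly T x T matrices of bounded operators).\<close>
definition is_binv :: "nat \<Rightarrow> ('a::chilbert, 'a) bmat \<Rightarrow> ('a, 'a) bmat \<Rightarrow> bool" where
  "is_binv T M R \<longleftrightarrow> (\<forall>r<T. \<forall>l<T. bcl (R r l)) \<and>
     beq T T (bmult T M R) bid \<and> beq T T (bmult T R M) bid"

definition binv :: "nat \<Rightarrow> ('a::chilbert, 'a) bmat \<Rightarrow> ('a, 'a) bmat" where
  "binv T M = (SOME R. is_binv T M R)"

definition fhat :: "nat \<Rightarrow> (nat \<Rightarrow> 'a \<Rightarrow> 'b::chilbert) \<Rightarrow> nat \<Rightarrow> 'a \<Rightarrow> 'b" where
  "fhat T A k = (\<lambda>x. scaleC (1 / of_nat T)
     (\<Sum>t<T. scaleC (exp (- 2 * of_real pi * \<i> * of_nat t * of_nat k / of_nat T)) (A t x)))"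

definition toep :: "nat \<Rightarrow> (nat \<Rightarrow> 'a \<Rightarrow> 'b::chilbert) \<Rightarrow> ('a, 'b) bmat" where
  "toep T A = (\<lambda>r l. fhat T A (nat ((int r - int l) mod int T)))"

definition Nmat :: "nat \<Rightarrow> ('a::chilbert, 'a) bmat" where
  "Nmat T = (\<lambda>r l x. if r = l then scaleC (exp (2 * of_real pi * \<i> * of_nat r / of_nat T)) x else 0)"

definition rho :: "nat \<Rightarrow> ('a::chilbert, 'a) bmat \<Rightarrow> complex set" where
  "rho T M = {z. \<exists>R. is_binv T (bminus (Nmat T) (bscale z M)) R}"

text \<open>Pi_{N,1,q} : V^N \<rightarrow> V^(qN) as a (qN) x N block matrix, and its adjoint.\<close>
definition Pi_stack :: "nat \<Rightarrow> ('a::chilbert, 'a) bmat" where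
  "Pi_stack N = (\<lambda>r l x. if r mod N = l then x else 0)"

definition Pi_adj :: "nat \<Rightarrow> ('a::chilbert, 'a) bmat" where
  "Pi_adj N = (\<lambda>l r x. if r mod N = l then x else 0)"

definition up :: "nat \<Rightarrow> ('a::chilbert, 'a) bmat" where
  "up q = (\<lambda>r l x. if r = q * l then x else 0)"

definition down :: "nat \<Rightarrow> ('a::chilbert, 'a) bmat" where
  "down q = (\<lambda>r l x. if l = q * r then x else 0)"

definition multirate ::
  "nat \<Rightarrow> nat \<Rightarrow> (nat \<Rightarrow> 'x::chilbert \<Rightarrow> 'x) \<Rightarrow> (nat \<Rightarrow> 'u::chilbert \<Rightarrow> 'x) \<Rightarrow> (nat \<Rightarrow> 'x \<Rightarrow> 'y::chilbert) \<Rightarrow> (nat \<Rightarrow> 'u \<Rightarrow> 'y)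
   \<Rightarrow> bool" where
  "multirate m n A B C D \<longleftrightarrow> m > 0 \<and> n > 0 \<and>
     (let T = m * (n div gcd m n) in
       (\<forall>t. bcl (A t) \<and> bcl (B t) \<and> bcl (C t) \<and> bcl (D t)) \<and>
       (\<forall>t. A (t + T) = A t \<and> B (t + T) = B t \<and> C (t + T) = C t \<and> D (t + T) = D t))"

definition htf ::
  "nat \<Rightarrow> nat \<Rightarrow> (nat \<Rightarrow> 'x::chilbert \<Rightarrow> 'x) \<Rightarrow> (nat \<Rightarrow> 'u::chilbert \<Rightarrow> 'x) \<Rightarrow> (nat \<Rightarrow> 'x \<Rightarrow> 'y::chilbert) \<Rightarrow> (nat \<Rightarrow> 'u \<Rightarrow> 'y)
   \<Rightarrow> complex \<Rightarrow> ('u, 'y) bmat" where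
  "htf m n A B C D z =
     (let c = gcd m n; mb = m div c; nb = n div c; T = m * nb;
          R = binv T (bminus (Nmat T) (bscale z (toep T A)));
          K = badd (bscale z (bmult T (toep T C) (bmult T R (toep T B)))) (toep T D)
      in bscale (1 / of_nat mb) (bmult T (Pi_adj m) (bmult T K (Pi_stack n))))"

end

theory Submission
  imports Defs
begin

(*
  Rotating the indices by l, r \<mapsto> (r + l) mod T, leaves every Toeplitz matrix of period T
  invariant and multiplies N_T by eps^l.  Hence it conjugates N_T - (z / eps^l) A into
  eps^(-l) (N_T - z A): with z also z / eps^l lies in the resolvent set, and the lifted
  transfer operator z C (N_T - z A)^(-1) B + D at z / eps^l is the rotated one at z.  The
  stacking operators turn this rotation into a simultaneous shift of the rows and columns of
  the harmonic transfer function, which is part 1.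

  If the coefficients are T-periodic and the period used is q T, their Fourier coefficients of
  period q T vanish at all indices that are not multiples of q.  So every Toeplitz matrix of
  period q T, the pencil N_qT - z A and, by uniqueness of inverses, also its inverse split into
  blocks along the residues mod q, and the block of residue 0 is the corresponding object of
  period T.  Therefore the columns q l of the harmonic transfer function vanish outside the rows
  divisible by q and reproduce the coarser harmonic transfer function there, which is part 2.
*)

text \<open>Only additivity and complex homogeneity of the coefficients enter the algebra below;
  boundedness (\<^const>\<open>bcl\<close>) is needed only for the entries of inverses.\<close>
definition clinear :: "('a::chilbert \<Rightarrow> 'b::chilbert) \<Rightarrow> bool" where
  "clinear f \<longleftrightarrow> (\<forall>x y. f (x + y) = f x + f y) \<and> (\<forall>a x. f (scaleC a x) = scaleC a (f x))"

lemma clinear_add: "clinear f \<Longrightarrow> f (x + y) = f x + f y"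
  by (simp add: clinear_def)

lemma clinear_scaleC: "clinear f \<Longrightarrow> f (scaleC a x) = scaleC a (f x)"
  by (simp add: clinear_def)

lemma clinear_zero: "clinear f \<Longrightarrow> f 0 = 0"
  using clinear_add[of f 0 0] by simp

lemma clinear_sum: "clinear f \<Longrightarrow> f (\<Sum>i\<in>S. g i) = (\<Sum>i\<in>S. f (g i))"
  by (induction S rule: infinite_finite_induct) (auto simp: clinear_zero clinear_add)

lemma clinear_diff: "clinear f \<Longrightarrow> f (x - y) = f x - f y"
  using clinear_add[of f "x - y" y] by (simp add: eq_diff_eq)

lemma clinear_scaleC_map: "clinear (scaleC a)"
  by (simp add: clinear_def scaleC_add_right scaleC_scaleC mult.commute)

lemma scaleC_zero_right: "scaleC a (0::'a::chilbert) = 0"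
  by (rule clinear_zero[OF clinear_scaleC_map])

lemma scaleC_zero_left: "scaleC 0 (x::'a::chilbert) = 0"
  using scaleC_of_real[of 0 x] by simp

lemma scaleC_diff_right: "scaleC a ((x::'a::chilbert) - y) = scaleC a x - scaleC a y"
  by (rule clinear_diff[OF clinear_scaleC_map])

lemma scaleC_sum_right: "scaleC a (\<Sum>i\<in>S. (g i::'a::chilbert)) = (\<Sum>i\<in>S. scaleC a (g i))"
  by (rule clinear_sum[OF clinear_scaleC_map])

lemma scaleC_sum_left: "scaleC (\<Sum>i\<in>S. c i) (x::'a::chilbert) = (\<Sum>i\<in>S. scaleC (c i) x)"
  by (induction S rule: infinite_finite_induct) (auto simp: scaleC_zero_left scaleC_add_left)

lemma clinear_compose: "clinear f \<Longrightarrow> clinear g \<Longrightarrow> clinear (\<lambda>x. f (g x))"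
  by (simp add: clinear_def)

lemma clinear_add_fun: "clinear f \<Longrightarrow> clinear g \<Longrightarrow> clinear (\<lambda>x. f x + g x)"
  by (simp add: clinear_def scaleC_add_right algebra_simps)

lemma clinear_diff_fun: "clinear f \<Longrightarrow> clinear g \<Longrightarrow> clinear (\<lambda>x. f x - g x)"
  by (simp add: clinear_def scaleC_diff_right algebra_simps)

lemma clinear_zero_fun: "clinear (\<lambda>x. 0)"
  by (simp add: clinear_def scaleC_zero_right)

lemma clinear_sum_fun: "(\<And>i. i \<in> S \<Longrightarrow> clinear (f i)) \<Longrightarrow> clinear (\<lambda>x. \<Sum>i\<in>S. f i x)"
  by (induction S rule: infinite_finite_induct) (auto simp: clinear_zero_fun clinear_add_fun)

lemma bcl_imp_clinear: "bcl f \<Longrightarrow> clinear f"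
  unfolding bcl_def clinear_def using linear_add bounded_linear.linear by blast

lemma cinner_scaleC_scaleC: "cinner (scaleC a x) (scaleC a x) = (cmod a)\<^sup>2 * cinner x x"
proof -
  have "cinner x (scaleC a x) = cnj (cnj a * cinner x x)"
    using cinner_commute[of x "scaleC a x"] cinner_scaleC_left[of a x x] by simp
  also have "\<dots> = a * cinner x x"
    using cinner_commute[of x x] by simp
  finally have "cinner (scaleC a x) (scaleC a x) = cnj a * (a * cinner x x)"
    using cinner_scaleC_left[of a x "scaleC a x"] by simp
  also have "\<dots> = (cnj a * a) * cinner x x"
    by (simp only: mult.assoc)
  also have "cnj a * a = (cmod a)\<^sup>2"
    by (metis complex_norm_square mult.commute)
  finally show ?thesis .
qed

lemma norm_scaleC: "norm (scaleC a (x::'a::chilbert)) = cmod a * norm x"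
proof -
  have "Re (cinner (scaleC a x) (scaleC a x)) = (cmod a)\<^sup>2 * Re (cinner x x)"
    by (simp add: cinner_scaleC_scaleC)
  then show ?thesis
    by (simp add: norm_eq_sqrt_cinner real_sqrt_mult)
qed

lemma bounded_linear_scaleC_map: "bounded_linear (scaleC a :: 'a::chilbert \<Rightarrow> 'a)"
proof (rule bounded_linear_intro[where K = "cmod a"])
  show "scaleC a (x + y) = scaleC a x + scaleC a y" for x y :: 'a
    by (rule scaleC_add_right)
  show "scaleC a (r *\<^sub>R x) = r *\<^sub>R scaleC a x" for r and x :: 'a
    by (metis scaleC_of_real scaleC_scaleC mult.commute)
  show "norm (scaleC a x) \<le> norm x * cmod a" for x :: 'a
    by (simp add: norm_scaleC)
qed

lemma bcl_scaleC_compose: "bcl f \<Longrightarrow> bcl (\<lambda>x. scaleC a (f x))"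
  unfolding bcl_def using bounded_linear_compose[OF bounded_linear_scaleC_map, of f a]
  by (simp add: o_def scaleC_scaleC mult.commute)

lemma bcl_zero: "bcl (\<lambda>x. 0)"
  by (simp add: bcl_def scaleC_zero_right)

lemma bmult_apply: "bmult p M N r l x = (\<Sum>k<p. M r k (N k l x))"
  by (simp add: bmult_def)

lemma is_binvI:
  assumes "\<And>a b. a < T \<Longrightarrow> b < T \<Longrightarrow> bcl (R a b)"
    and "\<And>a b x. a < T \<Longrightarrow> b < T \<Longrightarrow> (\<Sum>k<T. M a k (R k b x)) = (if a = b then x else 0)"
    and "\<And>a b x. a < T \<Longrightarrow> b < T \<Longrightarrow> (\<Sum>k<T. R a k (M k b x)) = (if a = b then x else 0)"
  shows "is_binv T M R"
  using assms unfolding is_binv_def beq_def bid_def by (auto simp: bmult_def)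

lemma is_binv_bcl: "is_binv T M R \<Longrightarrow> a < T \<Longrightarrow> b < T \<Longrightarrow> bcl (R a b)"
  by (simp add: is_binv_def)

lemma is_binv_clinear: "is_binv T M R \<Longrightarrow> a < T \<Longrightarrow> b < T \<Longrightarrow> clinear (R a b)"
  by (simp add: is_binv_bcl bcl_imp_clinear)

lemma is_binv_right:
  "is_binv T M R \<Longrightarrow> a < T \<Longrightarrow> b < T \<Longrightarrow> (\<Sum>k<T. M a k (R k b x)) = (if a = b then x else 0)"
  unfolding is_binv_def beq_def by (metis bmult_apply bid_def)

lemma is_binv_left:
  "is_binv T M R \<Longrightarrow> a < T \<Longrightarrow> b < T \<Longrightarrow> (\<Sum>k<T. R a k (M k b x)) = (if a = b then x else 0)"
  unfolding is_binv_def beq_def by (metis bmult_apply bid_def)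

lemma is_binv_unique:
  assumes R: "is_binv T M R" and R': "is_binv T M R'" and rs: "r < T" "s < T"
  shows "R r s = R' r s"
proof
  fix x
  have "R r s x = (\<Sum>k<T. R r k (if k = s then x else 0))"
    using rs is_binv_clinear[OF R] by (simp add: if_distrib clinear_zero sum.delta cong: if_cong)
  also have "\<dots> = (\<Sum>k<T. R r k (\<Sum>j<T. M k j (R' j s x)))"
    using rs is_binv_right[OF R'] by simp
  also have "\<dots> = (\<Sum>k<T. \<Sum>j<T. R r k (M k j (R' j s x)))"
    using rs is_binv_clinear[OF R] by (simp add: clinear_sum)
  also have "\<dots> = (\<Sum>j<T. if r = j then R' j s x else 0)"
    using rs is_binv_left[OF R] by (subst sum.swap) simp
  also have "\<dots> = R' r s x"
    using rs by (simp add: sum.delta)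
  finally show "R r s x = R' r s x" .
qed

lemma is_binv_conj:
  assumes R: "is_binv T M R" and \<sigma>: "bij_betw \<sigma> {..<T} {..<T}" and a: "a \<noteq> 0"
    and M': "\<And>r k y. r < T \<Longrightarrow> k < T \<Longrightarrow> M' r k y = scaleC a (M (\<sigma> r) (\<sigma> k) y)"
    and M_clinear: "\<And>r k. r < T \<Longrightarrow> k < T \<Longrightarrow> clinear (M r k)"
  shows "is_binv T M' (\<lambda>r s x. scaleC (1 / a) (R (\<sigma> r) (\<sigma> s) x))"
proof (rule is_binvI)
  have \<sigma>_lt: "\<And>r. r < T \<Longrightarrow> \<sigma> r < T"
    using \<sigma> bij_betwE by blast
  have \<sigma>_eq: "\<And>r s. r < T \<Longrightarrow> s < T \<Longrightarrow> \<sigma> r = \<sigma> s \<longleftrightarrow> r = s"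
    using \<sigma> unfolding bij_betw_def inj_on_def by blast
  show "bcl (\<lambda>x. scaleC (1 / a) (R (\<sigma> r) (\<sigma> s) x))" if "r < T" "s < T" for r s
    using that \<sigma>_lt by (intro bcl_scaleC_compose is_binv_bcl[OF R])
  show "(\<Sum>k<T. M' r k (scaleC (1 / a) (R (\<sigma> k) (\<sigma> s) x))) = (if r = s then x else 0)"
    if rs: "r < T" "s < T" for r s x
  proof -
    have "(\<Sum>k<T. M' r k (scaleC (1 / a) (R (\<sigma> k) (\<sigma> s) x)))
        = (\<Sum>k<T. M (\<sigma> r) (\<sigma> k) (R (\<sigma> k) (\<sigma> s) x))"
      using a by (intro sum.cong) (auto simp: M' rs \<sigma>_lt M_clinear clinear_scaleC scaleC_scaleC scaleC_one)
    also have "\<dots> = (\<Sum>k<T. M (\<sigma> r) k (R k (\<sigma> s) x))"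
      by (rule sum.reindex_bij_betw[OF \<sigma>])
    finally show ?thesis
      using is_binv_right[OF R] rs \<sigma>_lt \<sigma>_eq by simp
  qed
  show "(\<Sum>k<T. scaleC (1 / a) (R (\<sigma> r) (\<sigma> k) (M' k s x))) = (if r = s then x else 0)"
    if rs: "r < T" "s < T" for r s x
  proof -
    have "(\<Sum>k<T. scaleC (1 / a) (R (\<sigma> r) (\<sigma> k) (M' k s x)))
        = (\<Sum>k<T. R (\<sigma> r) (\<sigma> k) (M (\<sigma> k) (\<sigma> s) x))"
      using a is_binv_clinear[OF R]
      by (intro sum.cong) (auto simp: M' rs \<sigma>_lt clinear_scaleC scaleC_scaleC scaleC_one)
    also have "\<dots> = (\<Sum>k<T. R (\<sigma> r) k (M k (\<sigma> s) x))"
      by (rule sum.reindex_bij_betw[OF \<sigma>])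
    finally show ?thesis
      using is_binv_left[OF R] rs \<sigma>_lt \<sigma>_eq by simp
  qed
qed

lemma sum_lessThan_multiples:
  assumes q: "q > (0::nat)" and f: "\<And>k. k < q * T \<Longrightarrow> \<not> q dvd k \<Longrightarrow> f k = 0"
  shows "(\<Sum>k<q * T. f k) = (\<Sum>i<T. f (q * i))"
proof -
  have "(\<Sum>i<T. f (q * i)) = sum f ((\<lambda>i. q * i) ` {..<T})"
    using q by (simp add: sum.reindex inj_on_def)
  also have "\<dots> = (\<Sum>k<q * T. f k)"
  proof (rule sum.mono_neutral_left)
    show "\<forall>k\<in>{..<q * T} - (\<lambda>i. q * i) ` {..<T}. f k = 0"
    proof
      fix k assume k: "k \<in> {..<q * T} - (\<lambda>i. q * i) ` {..<T}"
      have "\<not> q dvd k"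
      proof
        assume "q dvd k"
        then obtain i where "k = q * i" ..
        with k q show False by auto
      qed
      with k f show "f k = 0" by auto
    qed
  qed (use q in auto)
  finally show ?thesis by simp
qed

definition residue_block_diag :: "nat \<Rightarrow> nat \<Rightarrow> ('a, 'b::chilbert) bmat \<Rightarrow> bool" where
  "residue_block_diag q T M \<longleftrightarrow> (\<forall>r<T. \<forall>s<T. r mod q \<noteq> s mod q \<longrightarrow> (\<forall>x. M r s x = 0))"

lemma residue_block_diagD:
  "residue_block_diag q T M \<Longrightarrow> r < T \<Longrightarrow> s < T \<Longrightarrow> r mod q \<noteq> s mod q \<Longrightarrow> M r s x = 0"
  by (simp add: residue_block_diag_def)

lemma is_binv_restrict:
  assumes R: "is_binv (q * T) M R" and q: "q > 0"
    and M_diag: "residue_block_diag q (q * T) M"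
  shows "is_binv T (\<lambda>i j. M (q * i) (q * j)) (\<lambda>i j. R (q * i) (q * j))"
proof (rule is_binvI)
  show "bcl (R (q * a) (q * b))" if "a < T" "b < T" for a b
    using that q by (intro is_binv_bcl[OF R]) auto
  show "(\<Sum>k<T. M (q * a) (q * k) (R (q * k) (q * b) x)) = (if a = b then x else 0)"
    if ab: "a < T" "b < T" for a b x
  proof -
    have "(\<Sum>k<T. M (q * a) (q * k) (R (q * k) (q * b) x)) = (\<Sum>k<q * T. M (q * a) k (R k (q * b) x))"
      using ab q by (intro sum_lessThan_multiples[symmetric]) (auto intro: residue_block_diagD[OF M_diag])
    then show ?thesis
      using is_binv_right[OF R, of "q * a" "q * b" x] ab q by simp
  qed
  show "(\<Sum>k<T. R (q * a) (q * k) (M (q * k) (q * b) x)) = (if a = b then x else 0)"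
    if ab: "a < T" "b < T" for a b x
  proof -
    have "(\<Sum>k<T. R (q * a) (q * k) (M (q * k) (q * b) x)) = (\<Sum>k<q * T. R (q * a) k (M k (q * b) x))"
      using ab q residue_block_diagD[OF M_diag] clinear_zero[OF is_binv_clinear[OF R]]
      by (intro sum_lessThan_multiples[symmetric]) (auto simp: dvd_eq_mod_eq_0)
    then show ?thesis
      using is_binv_left[OF R, of "q * a" "q * b" x] ab q by simp
  qed
qed

text \<open>Discarding the off-block entries of an inverse yields another inverse, which by uniqueness
  is the inverse itself.\<close>
lemma is_binv_residue_block_diag:
  assumes R: "is_binv T M R" and M_diag: "residue_block_diag q T M"
    and M_clinear: "\<And>r s. r < T \<Longrightarrow> s < T \<Longrightarrow> clinear (M r s)"
  shows "residue_block_diag q T R"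
proof -
  define R' where "R' = (\<lambda>r s x. if r mod q = s mod q then R r s x else 0)"
  have M0: "M a b 0 = 0" if "a < T" "b < T" for a b
    using that by (simp add: M_clinear clinear_zero)
  have R0: "R a b 0 = 0" if "a < T" "b < T" for a b
    using that by (simp add: is_binv_clinear[OF R] clinear_zero)
  have "is_binv T M R'"
  proof (rule is_binvI)
    show "bcl (R' a b)" if "a < T" "b < T" for a b
      using that by (cases "a mod q = b mod q") (auto simp: R'_def bcl_zero is_binv_bcl[OF R])
    show "(\<Sum>k<T. M a k (R' k b x)) = (if a = b then x else 0)" if ab: "a < T" "b < T" for a b x
    proof -
      have "(\<Sum>k<T. M a k (R' k b x)) = (if a mod q = b mod q then \<Sum>k<T. M a k (R k b x) else 0)"
        using ab M0 residue_block_diagD[OF M_diag] by (auto simp: R'_def intro!: sum.neutral sum.cong)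
      then show ?thesis
        using is_binv_right[OF R ab] by auto
    qed
    show "(\<Sum>k<T. R' a k (M k b x)) = (if a = b then x else 0)" if ab: "a < T" "b < T" for a b x
    proof -
      have "(\<Sum>k<T. R' a k (M k b x)) = (if a mod q = b mod q then \<Sum>k<T. R a k (M k b x) else 0)"
        using ab R0 residue_block_diagD[OF M_diag] by (auto simp: R'_def intro!: sum.neutral sum.cong)
      then show ?thesis
        using is_binv_left[OF R ab] by auto
    qed
  qed
  then show ?thesis
    using is_binv_unique[OF R] by (auto simp: residue_block_diag_def R'_def)
qed

lemma clinear_fhat: "(\<And>t. clinear (A t)) \<Longrightarrow> clinear (fhat T A k)"
  unfolding fhat_def by (intro clinear_compose[OF clinear_scaleC_map] clinear_sum_fun
      clinear_compose[OF clinear_scaleC_map])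

lemma clinear_toep: "(\<And>t. clinear (A t)) \<Longrightarrow> clinear (toep T A r s)"
  unfolding toep_def by (rule clinear_fhat)

lemma clinear_Nmat: "clinear (Nmat T r s)"
  unfolding Nmat_def by (cases "r = s") (auto simp: clinear_scaleC_map clinear_zero_fun)

definition pencil :: "nat \<Rightarrow> ('a::chilbert, 'a) bmat \<Rightarrow> complex \<Rightarrow> ('a, 'a) bmat" where
  "pencil T M z = bminus (Nmat T) (bscale z M)"

lemma pencil_apply: "pencil T M z r s y = Nmat T r s y - scaleC z (M r s y)"
  by (simp add: pencil_def bminus_def bscale_def)

lemma clinear_pencil: "(\<And>t. clinear (A t)) \<Longrightarrow> clinear (pencil T (toep T A) z r s)"
  unfolding pencil_def bminus_def bscale_def
  by (intro clinear_diff_fun clinear_Nmat clinear_compose[OF clinear_scaleC_map] clinear_toep)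

definition resolvent :: "nat \<Rightarrow> (nat \<Rightarrow> 'x::chilbert \<Rightarrow> 'x) \<Rightarrow> complex \<Rightarrow> ('x, 'x) bmat" where
  "resolvent T A z = binv T (pencil T (toep T A) z)"

lemma rho_iff_pencil: "z \<in> rho T M \<longleftrightarrow> (\<exists>R. is_binv T (pencil T M z) R)"
  by (simp add: rho_def pencil_def)

lemma is_binv_resolvent:
  assumes "z \<in> rho T (toep T A)"
  shows "is_binv T (pencil T (toep T A) z) (resolvent T A z)"
  using assms unfolding rho_iff_pencil resolvent_def binv_def by (rule someI_ex)

lemma resolvent_eq:
  assumes R: "is_binv T (pencil T (toep T A) z) R" and "r < T" "s < T"
  shows "resolvent T A z r s = R r s"
proof -
  have "z \<in> rho T (toep T A)"
    using R rho_iff_pencil by blast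
  from is_binv_unique[OF is_binv_resolvent[OF this] R assms(2,3)] show ?thesis .
qed

definition lifted_tf ::
  "nat \<Rightarrow> (nat \<Rightarrow> 'u::chilbert \<Rightarrow> 'x::chilbert) \<Rightarrow> (nat \<Rightarrow> 'x \<Rightarrow> 'y::chilbert) \<Rightarrow> (nat \<Rightarrow> 'u \<Rightarrow> 'y)
   \<Rightarrow> complex \<Rightarrow> ('x, 'x) bmat \<Rightarrow> ('u, 'y) bmat" where
  "lifted_tf T B C D z R = badd (bscale z (bmult T (toep T C) (bmult T R (toep T B)))) (toep T D)"

lemma lifted_tf_apply: "lifted_tf T B C D z R a b x =
    scaleC z (\<Sum>k<T. toep T C a k (\<Sum>j<T. R k j (toep T B j b x))) + toep T D a b x"
  by (simp add: lifted_tf_def badd_def bscale_def bmult_def)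

lemma lifted_tf_cong:
  "(\<And>i j. i < T \<Longrightarrow> j < T \<Longrightarrow> R i j = R' i j) \<Longrightarrow> lifted_tf T B C D z R = lifted_tf T B C D z R'"
  unfolding lifted_tf_def bmult_def by (intro ext arg_cong2[where f = badd] refl) (simp add: bscale_def)

lemma clinear_lifted_tf:
  assumes "\<And>t. clinear (B t)" "\<And>t. clinear (C t)" "\<And>t. clinear (D t)"
    and "\<And>i j. i < T \<Longrightarrow> j < T \<Longrightarrow> clinear (R i j)"
  shows "clinear (lifted_tf T B C D z R a b)"
proof -
  have inner: "clinear (\<lambda>x. \<Sum>j<T. R k j (toep T B j b x))" if "k < T" for k
    by (rule clinear_sum_fun, rule clinear_compose) (use assms that in \<open>auto intro: clinear_toep\<close>)
  have "clinear (\<lambda>x. \<Sum>k<T. toep T C a k (\<Sum>j<T. R k j (toep T B j b x)))"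
    by (rule clinear_sum_fun, rule clinear_compose[OF clinear_toep]) (use assms inner in auto)
  then show ?thesis
    unfolding lifted_tf_def badd_def bscale_def bmult_def
    using assms by (intro clinear_add_fun clinear_compose[OF clinear_scaleC_map] clinear_toep)
qed

lemma htf_eq_lifted_tf: "htf m n A B C D z =
   (let T = m * (n div gcd m n)
    in bscale (1 / of_nat (m div gcd m n))
         (bmult T (Pi_adj m) (bmult T (lifted_tf T B C D z (resolvent T A z)) (Pi_stack n))))"
  by (simp only: htf_def lifted_tf_def resolvent_def pencil_def Let_def)

lemma bmult_Pi_adj_Pi_stack:
  assumes "\<And>a b. K a b 0 = 0"
  shows "bmult T (Pi_adj m) (bmult T K (Pi_stack n)) r k x =
    (\<Sum>a<T. if a mod m = r then (\<Sum>b<T. if b mod n = k then K a b x else 0) else 0)"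
proof -
  have "bmult T K (Pi_stack n) a k x = (\<Sum>b<T. if b mod n = k then K a b x else 0)" for a
    unfolding bmult_apply Pi_stack_def using assms by (intro sum.cong) auto
  then show ?thesis
    unfolding bmult_apply[of T "Pi_adj m"] by (simp add: Pi_adj_def)
qed

lemma clinear_lifted_tf_resolvent:
  assumes z: "z \<in> rho T (toep T A)"
    and "\<And>t. clinear (B t)" "\<And>t. clinear (C t)" "\<And>t. clinear (D t)"
  shows "clinear (lifted_tf T B C D z (resolvent T A z) a b)"
  using assms(2-4) is_binv_clinear[OF is_binv_resolvent[OF z]] by (rule clinear_lifted_tf)

lemma htf_entry:
  assumes T: "T = m * (n div gcd m n)" and z: "z \<in> rho T (toep T A)"
    and "\<And>t. clinear (B t)" "\<And>t. clinear (C t)" "\<And>t. clinear (D t)"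
  shows "htf m n A B C D z r k x = scaleC (1 / of_nat (m div gcd m n))
    (\<Sum>a<T. if a mod m = r then
       (\<Sum>b<T. if b mod n = k then lifted_tf T B C D z (resolvent T A z) a b x else 0) else 0)"
proof -
  let ?K = "lifted_tf T B C D z (resolvent T A z)"
  have K_clinear: "clinear (?K a b)" for a b
    using z assms(3-5) by (rule clinear_lifted_tf_resolvent)
  have "bmult T (Pi_adj m) (bmult T ?K (Pi_stack n)) r k x =
    (\<Sum>a<T. if a mod m = r then (\<Sum>b<T. if b mod n = k then ?K a b x else 0) else 0)"
    by (rule bmult_Pi_adj_Pi_stack, rule clinear_zero, rule K_clinear)
  moreover have "htf m n A B C D z r k x =
      scaleC (1 / of_nat (m div gcd m n)) (bmult T (Pi_adj m) (bmult T ?K (Pi_stack n)) r k x)"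
    by (simp only: htf_eq_lifted_tf Let_def T bscale_def)
  ultimately show ?thesis
    by simp
qed

lemma htf_zero:
  assumes T: "T = m * (n div gcd m n)" and z: "z \<in> rho T (toep T A)"
    and B: "\<And>t. clinear (B t)" and C: "\<And>t. clinear (C t)" and D: "\<And>t. clinear (D t)"
  shows "htf m n A B C D z r k 0 = 0"
  unfolding htf_entry[OF T z B C D] clinear_zero[OF clinear_lifted_tf_resolvent[OF z B C D]]
  by (simp only: if_cancel sum.neutral_const scaleC_zero_right)

section \<open>Shifting rows and columns\<close>

definition unit_root :: "nat \<Rightarrow> complex" where
  "unit_root T = exp (2 * of_real pi * \<i> / of_nat T)"

lemma unit_root_nonzero: "unit_root T \<noteq> 0"
  by (simp add: unit_root_def)

lemma unit_root_power: "unit_root T ^ r = exp (2 * of_real pi * \<i> * of_nat r / of_nat T)"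
  unfolding unit_root_def exp_of_nat_mult[symmetric] by (simp add: mult.commute)

lemma unit_root_power_mod:
  assumes "T > 0"
  shows "unit_root T ^ (r mod T) = unit_root T ^ r"
proof -
  have "unit_root T ^ T = 1"
    using complex_root_unity[of T 1] assms by (simp add: unit_root_def)
  then have "unit_root T ^ (T * (r div T)) = 1"
    by (simp add: power_mult)
  moreover have "unit_root T ^ r = unit_root T ^ (T * (r div T)) * unit_root T ^ (r mod T)"
    by (simp flip: power_add)
  ultimately show ?thesis
    by simp
qed

lemma bij_betw_rotate:
  assumes "T > (0::nat)"
  shows "bij_betw (\<lambda>r. (r + l) mod T) {..<T} {..<T}"
proof (rule bij_betwI[where g = "\<lambda>r. (r + (T - l mod T)) mod T"])
  show "((r + l) mod T + (T - l mod T)) mod T = r" if "r \<in> {..<T}" for r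
  proof -
    have "((r + l) mod T + (T - l mod T)) mod T = (r + (l mod T + (T - l mod T))) mod T"
      by (metis add.assoc mod_add_left_eq mod_add_right_eq)
    also have "l mod T + (T - l mod T) = T"
      using assms by simp
    finally show ?thesis
      using that by simp
  qed
  show "((r + (T - l mod T)) mod T + l) mod T = r" if "r \<in> {..<T}" for r
  proof -
    have "((r + (T - l mod T)) mod T + l) mod T = (r + ((T - l mod T) + l mod T)) mod T"
      by (metis add.assoc mod_add_left_eq mod_add_right_eq)
    also have "(T - l mod T) + l mod T = T"
      using assms by simp
    finally show ?thesis
      using that by simp
  qed
qed (use assms in auto)

lemma Nmat_rotate:
  assumes T: "T > 0" and rs: "r < T" "s < T"
  shows "Nmat T r s y = scaleC (1 / unit_root T ^ l) (Nmat T ((r + l) mod T) ((s + l) mod T) y)"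
proof (cases "r = s")
  case True
  have "unit_root T ^ ((r + l) mod T) / unit_root T ^ l = unit_root T ^ r"
    using unit_root_nonzero by (simp add: unit_root_power_mod[OF T] power_add)
  then show ?thesis
    using True by (simp add: Nmat_def unit_root_power[symmetric] scaleC_scaleC)
next
  case False
  then have "(r + l) mod T \<noteq> (s + l) mod T"
    using bij_betw_rotate[OF T, of l] rs unfolding bij_betw_def inj_on_def by blast
  with False show ?thesis
    by (simp add: Nmat_def scaleC_zero_right)
qed

lemma toep_rotate:
  assumes "T > 0"
  shows "toep T X ((r + l) mod T) ((s + l) mod T) = toep T X r s"
proof -
  have "(int ((r + l) mod T) - int ((s + l) mod T)) mod int T
      = ((int r + int l) mod int T - (int s + int l) mod int T) mod int T"
    by (simp add: zmod_int)
  also have "\<dots> = (int r - int s) mod int T"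
    by (simp add: mod_diff_eq)
  finally show ?thesis
    by (simp add: toep_def)
qed

lemma pencil_rotate:
  assumes T: "T > 0" and rs: "r < T" "s < T"
  shows "pencil T (toep T A) (z / unit_root T ^ l) r s y =
    scaleC (1 / unit_root T ^ l) (pencil T (toep T A) z ((r + l) mod T) ((s + l) mod T) y)"
proof -
  have "pencil T (toep T A) (z / unit_root T ^ l) r s y =
      scaleC (1 / unit_root T ^ l) (Nmat T ((r + l) mod T) ((s + l) mod T) y) -
      scaleC (1 / unit_root T ^ l) (scaleC z (toep T A ((r + l) mod T) ((s + l) mod T) y))"
    unfolding pencil_apply Nmat_rotate[OF assms, where l = l] toep_rotate[OF T]
    by (simp add: scaleC_scaleC)
  then show ?thesis
    by (simp only: pencil_apply scaleC_diff_right)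
qed

lemma is_binv_pencil_rotate:
  assumes T: "T > 0" and A: "\<And>t. clinear (A t)" and z: "z \<in> rho T (toep T A)"
  shows "is_binv T (pencil T (toep T A) (z / unit_root T ^ l))
    (\<lambda>r s x. scaleC (unit_root T ^ l) (resolvent T A z ((r + l) mod T) ((s + l) mod T) x))"
proof -
  have "is_binv T (pencil T (toep T A) (z / unit_root T ^ l))
    (\<lambda>r s x. scaleC (1 / (1 / unit_root T ^ l)) (resolvent T A z ((r + l) mod T) ((s + l) mod T) x))"
    by (rule is_binv_conj[OF is_binv_resolvent[OF z] bij_betw_rotate[OF T]])
      (use pencil_rotate[OF T] clinear_pencil[OF A] unit_root_nonzero in auto)
  then show ?thesis
    by simp
qed

lemma rho_rotate:
  assumes "T > 0" "\<And>t. clinear (A t)" "z \<in> rho T (toep T A)"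
  shows "z / unit_root T ^ l \<in> rho T (toep T A)"
  unfolding rho_iff_pencil by (rule exI, rule is_binv_pencil_rotate[OF assms])

lemma lifted_tf_rotate:
  assumes T: "T > 0" and A: "\<And>t. clinear (A t)" and C: "\<And>t. clinear (C t)"
    and z: "z \<in> rho T (toep T A)"
  shows "lifted_tf T B C D (z / unit_root T ^ l) (resolvent T A (z / unit_root T ^ l)) a b =
    lifted_tf T B C D z (resolvent T A z) ((a + l) mod T) ((b + l) mod T)"
proof
  fix x
  define \<sigma> where "\<sigma> = (\<lambda>r. (r + l) mod T)"
  define \<epsilon> where "\<epsilon> = unit_root T ^ l"
  define R where "R = resolvent T A z"
  have \<sigma>: "bij_betw \<sigma> {..<T} {..<T}"
    unfolding \<sigma>_def by (rule bij_betw_rotate[OF T])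
  have toep_\<sigma>: "toep T X (\<sigma> r) (\<sigma> s) = toep T X r s" for X r s
    unfolding \<sigma>_def by (rule toep_rotate[OF T])
  have \<epsilon>: "\<epsilon> \<noteq> 0"
    unfolding \<epsilon>_def using unit_root_nonzero by simp
  have "lifted_tf T B C D (z / \<epsilon>) (resolvent T A (z / \<epsilon>)) =
      lifted_tf T B C D (z / \<epsilon>) (\<lambda>r s x. scaleC \<epsilon> (R (\<sigma> r) (\<sigma> s) x))"
  proof (rule lifted_tf_cong)
    show "resolvent T A (z / \<epsilon>) r s = (\<lambda>x. scaleC \<epsilon> (R (\<sigma> r) (\<sigma> s) x))"
      if "r < T" "s < T" for r s
      unfolding \<epsilon>_def R_def \<sigma>_def using that by (rule resolvent_eq[OF is_binv_pencil_rotate[OF T A z]])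
  qed
  then have "lifted_tf T B C D (z / \<epsilon>) (resolvent T A (z / \<epsilon>)) a b x =
      scaleC (z / \<epsilon>) (\<Sum>k<T. toep T C a k (\<Sum>j<T. scaleC \<epsilon> (R (\<sigma> k) (\<sigma> j) (toep T B j b x))))
      + toep T D a b x"
    by (simp only: lifted_tf_apply)
  also have "\<dots> = scaleC z (\<Sum>k<T. toep T C (\<sigma> a) (\<sigma> k)
      (\<Sum>j<T. R (\<sigma> k) (\<sigma> j) (toep T B (\<sigma> j) (\<sigma> b) x))) + toep T D (\<sigma> a) (\<sigma> b) x"
    using \<epsilon> by (simp add: toep_\<sigma> clinear_scaleC[OF clinear_toep[OF C]]
        scaleC_sum_right[symmetric] scaleC_scaleC)
  also have "\<dots> = lifted_tf T B C D z R (\<sigma> a) (\<sigma> b) x"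
    unfolding lifted_tf_apply
    by (simp only: sum.reindex_bij_betw[OF \<sigma>, where g = "\<lambda>j. R _ j (toep T B j _ x)"]
        sum.reindex_bij_betw[OF \<sigma>, where g = "\<lambda>k. toep T C _ k (\<Sum>j<T. R k j (toep T B j _ x))"])
  finally show "lifted_tf T B C D (z / unit_root T ^ l) (resolvent T A (z / unit_root T ^ l)) a b x =
      lifted_tf T B C D z (resolvent T A z) ((a + l) mod T) ((b + l) mod T) x"
    unfolding \<epsilon>_def R_def \<sigma>_def .
qed

lemma mod_add_eq_self_iff:
  assumes "(l::nat) < n"
  shows "(b + l) mod n = l \<longleftrightarrow> b mod n = 0"
proof -
  have "(b + l) mod n = l \<longleftrightarrow> (b + l) mod n = (0 + l) mod n"
    using assms by simp
  also have "\<dots> \<longleftrightarrow> b mod n = 0"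
    by (simp add: mod_eq_dvd_iff_nat dvd_eq_mod_eq_0)
  finally show ?thesis .
qed

lemma mod_eq_nat_diff_mod_iff:
  assumes k: "(k::nat) < m"
  shows "a mod m = nat ((int k - int l) mod int m) \<longleftrightarrow> (a + l) mod m = k"
proof -
  have "a mod m = nat ((int k - int l) mod int m) \<longleftrightarrow> int a mod int m = (int k - int l) mod int m"
    using k by (auto simp: nat_eq_iff2 zmod_int)
  also have "\<dots> \<longleftrightarrow> (int a + int l) mod int m = int k mod int m"
    by (simp add: mod_eq_dvd_iff algebra_simps)
  also have "\<dots> \<longleftrightarrow> (a + l) mod m = k"
    using k by (simp flip: zmod_int of_nat_add)
  finally show ?thesis .
qed
lemma dvd_mult_div_gcd: "(n::nat) dvd m * (n div gcd m n)"
proof -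
  have "m * (n div gcd m n) = m div gcd m n * n"
    by (simp add: div_mult_swap mult.commute)
  then show ?thesis
    by simp
qed

lemma htf_rotate:
  assumes m: "m > 0" and n: "n > 0"
    and A: "\<And>t. clinear (A t)" and B: "\<And>t. clinear (B t)" and C: "\<And>t. clinear (C t)"
    and D: "\<And>t. clinear (D t)"
    and T: "T = m * (n div gcd m n)" and z: "z \<in> rho T (toep T A)" and k: "k < m" and l: "l < n"
  shows "htf m n A B C D z k l =
    htf m n A B C D (z / unit_root T ^ l) (nat ((int k - int l) mod int m)) 0"
proof
  fix x
  have T_pos: "T > 0"
    using T m n by (simp add: div_greater_zero_iff)
  have "m dvd T" "n dvd T"
    using T dvd_mult_div_gcd by auto
  define \<sigma> where "\<sigma> = (\<lambda>r. (r + l) mod T)"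
  define K where "K = lifted_tf T B C D z (resolvent T A z)"
  define c :: complex where "c = 1 / of_nat (m div gcd m n)"
  let ?z' = "z / unit_root T ^ l" and ?k' = "nat ((int k - int l) mod int m)"
  have \<sigma>: "bij_betw \<sigma> {..<T} {..<T}"
    unfolding \<sigma>_def by (rule bij_betw_rotate[OF T_pos])
  have row: "\<sigma> a mod m = k \<longleftrightarrow> a mod m = ?k'" for a
    unfolding \<sigma>_def mod_mod_cancel[OF \<open>m dvd T\<close>] mod_eq_nat_diff_mod_iff[OF k] ..
  have col: "\<sigma> b mod n = l \<longleftrightarrow> b mod n = 0" for b
    unfolding \<sigma>_def mod_mod_cancel[OF \<open>n dvd T\<close>] mod_add_eq_self_iff[OF l] ..
  have "htf m n A B C D ?z' ?k' 0 x = scaleC c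
      (\<Sum>a<T. if a mod m = ?k' then (\<Sum>b<T. if b mod n = 0 then K (\<sigma> a) (\<sigma> b) x else 0) else 0)"
    unfolding htf_entry[OF T rho_rotate[OF T_pos A z] B C D] K_def \<sigma>_def c_def
      lifted_tf_rotate[OF T_pos A C z] ..
  also have "\<dots> = scaleC c
      (\<Sum>a<T. if \<sigma> a mod m = k then (\<Sum>b<T. if \<sigma> b mod n = l then K (\<sigma> a) (\<sigma> b) x else 0) else 0)"
    unfolding row col ..
  also have "\<dots> = scaleC c
      (\<Sum>a<T. if a mod m = k then (\<Sum>b<T. if b mod n = l then K a b x else 0) else 0)"
    by (simp only: sum.reindex_bij_betw[OF \<sigma>, where g = "\<lambda>b. if b mod n = l then K _ b x else 0"]
        sum.reindex_bij_betw[OF \<sigma>,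
          where g = "\<lambda>a. if a mod m = k then (\<Sum>b<T. if b mod n = l then K a b x else 0) else 0"])
  also have "\<dots> = htf m n A B C D z k l x"
    unfolding htf_entry[OF T z B C D] K_def c_def ..
  finally show "htf m n A B C D z k l x = htf m n A B C D ?z' ?k' 0 x" ..
qed

section \<open>Coefficients with a shorter period\<close>

lemma sum_root_unity_powers:
  assumes q: "q > (0::nat)"
  shows "(\<Sum>j<q. exp (- 2 * of_real pi * \<i> * of_nat k / of_nat q) ^ j) =
    (if q dvd k then of_nat q else 0)"
proof -
  define w where "w = exp (2 * of_real pi * \<i> * of_nat k / of_nat q)"
  have inv: "exp (- 2 * of_real pi * \<i> * of_nat k / of_nat q) = inverse w"
    unfolding w_def by (simp add: exp_minus[symmetric])
  have "w = 1 \<longleftrightarrow> q dvd k"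
    unfolding w_def using q by (simp add: complex_root_unity_eq_1)
  moreover have "inverse w ^ q = 1"
    unfolding w_def using q by (simp add: power_inverse complex_root_unity)
  ultimately show ?thesis
    unfolding inv using geometric_sum[of "inverse w" q] by auto
qed

lemma sum_lessThan_mult_split:
  fixes q T :: nat
  shows "(\<Sum>t<q * T. g t) = (\<Sum>j<q. \<Sum>t<T. g (t + j * T))"
proof -
  have "(\<Sum>t<q * T. g t) = (\<Sum>j<q. sum g {j * T..<j * T + T})"
    using sum.nat_group[of g T q] by (simp add: mult.commute)
  also have "\<dots> = (\<Sum>j<q. \<Sum>t<T. g (t + j * T))"
  proof (rule sum.cong[OF refl])
    show "sum g {j * T..<j * T + T} = (\<Sum>t<T. g (t + j * T))" for j
      using sum.shift_bounds_nat_ivl[of g 0 "j * T" T] by (simp add: atLeast0LessThan add.commute)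
  qed
  finally show ?thesis .
qed

lemma periodic_add_mult:
  assumes "\<And>t. A (t + T) = A t"
  shows "A (t + (j::nat) * T) = A t"
proof (induction j)
  case (Suc j)
  have "A (t + Suc j * T) = A ((t + j * T) + T)"
    by (simp add: algebra_simps)
  then show ?case
    using Suc assms by simp
qed simp

text \<open>The sum over q T splits into q sums over T weighted by the powers of a q-th root of unity,
  and these powers add up to 0 unless q divides k.\<close>
lemma fhat_periodic:
  assumes q: "q > (0::nat)" and T: "T > 0" and per: "\<And>t. A (t + T) = A t"
  shows "fhat (q * T) A k x = (if q dvd k then fhat T A (k div q) x else 0)"
proof -
  let ?e = "\<lambda>t. exp (- 2 * of_real pi * \<i> * of_nat t * of_nat k / of_nat (q * T))"
  let ?w = "exp (- 2 * of_real pi * \<i> * of_nat k / of_nat q)"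
  have e_shift: "?e (t + j * T) = ?e t * ?w ^ j" for t j
  proof -
    have "?e (t + j * T) = exp (- 2 * of_real pi * \<i> * of_nat t * of_nat k / of_nat (q * T) +
        of_nat j * (- 2 * of_real pi * \<i> * of_nat k / of_nat q))"
      using q T by (intro arg_cong[where f = exp]) (simp add: field_simps)
    then show ?thesis
      by (simp only: exp_add exp_of_nat_mult)
  qed
  have "(\<Sum>t<q * T. scaleC (?e t) (A t x)) = (\<Sum>j<q. \<Sum>t<T. scaleC (?e t * ?w ^ j) (A t x))"
    unfolding sum_lessThan_mult_split e_shift periodic_add_mult[of A, OF per] ..
  also have "\<dots> = (\<Sum>t<T. scaleC (?e t * (\<Sum>j<q. ?w ^ j)) (A t x))"
    by (subst sum.swap) (simp add: sum_distrib_left scaleC_sum_left)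
  finally have S: "(\<Sum>t<q * T. scaleC (?e t) (A t x)) =
      (\<Sum>t<T. scaleC (?e t * (if q dvd k then of_nat q else 0)) (A t x))"
    by (simp only: sum_root_unity_powers[OF q])
  show ?thesis
  proof (cases "q dvd k")
    case True
    then obtain k' where k: "k = q * k'" ..
    have "fhat (q * T) A k x = (\<Sum>t<T. scaleC (1 / of_nat (q * T) * (?e t * of_nat q)) (A t x))"
      unfolding fhat_def S using True by (simp add: scaleC_sum_right scaleC_scaleC)
    also have "\<dots> = (\<Sum>t<T. scaleC (1 / of_nat T *
        exp (- 2 * of_real pi * \<i> * of_nat t * of_nat k' / of_nat T)) (A t x))"
      using q by (intro sum.cong refl arg_cong2[where f = scaleC]) (simp_all add: k field_simps)
    also have "\<dots> = fhat T A (k div q) x"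
      unfolding fhat_def using k q by (simp add: scaleC_sum_right scaleC_scaleC)
    finally show ?thesis
      using True by simp
  next
    case False
    then show ?thesis
      unfolding fhat_def S by (simp add: scaleC_zero_left scaleC_zero_right)
  qed
qed

lemma dvd_nat_mod_diff_iff:
  assumes "q > 0" "T > 0"
  shows "q dvd nat ((int r - int s) mod int (q * T)) \<longleftrightarrow> r mod q = s mod q"
proof -
  have "(int r - int s) mod int (q * T) \<ge> 0"
    using assms by simp
  then have "q dvd nat ((int r - int s) mod int (q * T)) \<longleftrightarrow> int q dvd (int r - int s) mod int (q * T)"
    by (metis int_nat_eq of_nat_dvd_iff)
  also have "\<dots> \<longleftrightarrow> int q dvd int r - int s"
    by (rule dvd_mod_iff) simp
  also have "\<dots> \<longleftrightarrow> int r mod int q = int s mod int q"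
    by (rule mod_eq_dvd_iff[symmetric])
  also have "\<dots> \<longleftrightarrow> r mod q = s mod q"
    by (metis of_nat_eq_iff of_nat_mod)
  finally show ?thesis .
qed

lemma toep_periodic_block_diag:
  assumes "q > (0::nat)" "T > 0" "\<And>t. A (t + T) = A t"
  shows "residue_block_diag q (q * T) (toep (q * T) A)"
  unfolding residue_block_diag_def toep_def fhat_periodic[where A = A, OF assms]
    dvd_nat_mod_diff_iff[OF assms(1,2)]
  by simp

lemma toep_periodic_multiples:
  assumes q: "q > (0::nat)" and T: "T > 0" and per: "\<And>t. A (t + T) = A t"
  shows "toep (q * T) A (q * i) (q * j) = toep T A i j"
proof
  fix x
  have "(int (q * i) - int (q * j)) mod int (q * T) = int q * ((int i - int j) mod int T)"
    by (simp add: mult_mod_right right_diff_distrib)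
  then have "nat ((int (q * i) - int (q * j)) mod int (q * T)) = q * nat ((int i - int j) mod int T)"
    using T by (simp add: nat_mult_distrib)
  then show "toep (q * T) A (q * i) (q * j) x = toep T A i j x"
    unfolding toep_def using fhat_periodic[where A = A, OF q T per] q by simp
qed

lemma Nmat_multiples:
  assumes "q > (0::nat)"
  shows "Nmat (q * T) (q * i) (q * j) = Nmat T i j"
proof -
  have "exp (2 * of_real pi * \<i> * of_nat (q * i) / of_nat (q * T)) =
      exp (2 * of_real pi * \<i> * of_nat i / of_nat T)"
    using assms by (intro arg_cong[where f = exp]) (simp add: field_simps)
  moreover have "q * i = q * j \<longleftrightarrow> i = j"
    using assms by simp
  ultimately show ?thesis
    unfolding Nmat_def by (simp only:)
qed

lemma pencil_periodic_block_diag: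
  assumes "q > (0::nat)" "T > 0" "\<And>t. A (t + T) = A t"
  shows "residue_block_diag q (q * T) (pencil (q * T) (toep (q * T) A) z)"
  using residue_block_diagD[OF toep_periodic_block_diag[where A = A, OF assms]]
  by (auto simp: residue_block_diag_def pencil_apply Nmat_def scaleC_zero_right)

lemma pencil_periodic_multiples:
  assumes "q > (0::nat)" "T > 0" "\<And>t. A (t + T) = A t"
  shows "pencil (q * T) (toep (q * T) A) z (q * i) (q * j) = pencil T (toep T A) z i j"
  using assms by (simp add: pencil_def bminus_def bscale_def toep_periodic_multiples[where A = A]
      Nmat_multiples)

lemma is_binv_resolvent_multiples:
  assumes q: "q > (0::nat)" and T: "T > 0" and per: "\<And>t. A (t + T) = A t"
    and z: "z \<in> rho (q * T) (toep (q * T) A)"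
  shows "is_binv T (pencil T (toep T A) z) (\<lambda>i j. resolvent (q * T) A z (q * i) (q * j))"
  using is_binv_restrict[OF is_binv_resolvent[OF z] q pencil_periodic_block_diag[where A = A, OF q T per]]
  unfolding pencil_periodic_multiples[where A = A, OF q T per] .

lemma rho_periodic_subset:
  assumes "q > (0::nat)" "T > 0" "\<And>t. A (t + T) = A t"
  shows "rho (q * T) (toep (q * T) A) \<subseteq> rho T (toep T A)"
  using is_binv_resolvent_multiples[where A = A, OF assms] rho_iff_pencil by blast

lemma resolvent_periodic_multiples:
  assumes "q > (0::nat)" "T > 0" "\<And>t. A (t + T) = A t"
    and "z \<in> rho (q * T) (toep (q * T) A)" and "i < T" "j < T"
  shows "resolvent T A z i j = resolvent (q * T) A z (q * i) (q * j)"
  using resolvent_eq[OF is_binv_resolvent_multiples[where A = A, OF assms(1-4)] assms(5,6)] .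

lemma resolvent_periodic_block_diag:
  assumes "q > (0::nat)" "T > 0" "\<And>t. A (t + T) = A t" and A: "\<And>t. clinear (A t)"
    and z: "z \<in> rho (q * T) (toep (q * T) A)"
  shows "residue_block_diag q (q * T) (resolvent (q * T) A z)"
  using is_binv_resolvent[OF z] pencil_periodic_block_diag[where A = A, OF assms(1-3)]
  by (rule is_binv_residue_block_diag) (rule clinear_pencil[OF A])

lemma lifted_tf_block_diag:
  assumes B: "residue_block_diag q T (toep T B)" and C: "residue_block_diag q T (toep T C)"
    and D: "residue_block_diag q T (toep T D)" and R: "residue_block_diag q T R"
    and R0: "\<And>i j. i < T \<Longrightarrow> j < T \<Longrightarrow> R i j 0 = 0" and C0: "\<And>i j. toep T C i j 0 = 0"
  shows "residue_block_diag q T (lifted_tf T B C D z R)"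
  unfolding residue_block_diag_def
proof (intro allI impI)
  fix a b x assume ab: "a < T" "b < T" "a mod q \<noteq> b mod q"
  have inner: "(\<Sum>j<T. R k j (toep T B j b x)) = 0" if "k < T" "k mod q \<noteq> b mod q" for k
    using that ab residue_block_diagD[OF R] residue_block_diagD[OF B] R0
    by (intro sum.neutral) (metis lessThan_iff)
  have "toep T C a k (\<Sum>j<T. R k j (toep T B j b x)) = 0" if "k < T" for k
    using that ab inner C0 residue_block_diagD[OF C] by (cases "k mod q = a mod q") auto
  then show "lifted_tf T B C D z R a b x = 0"
    using ab residue_block_diagD[OF D] by (simp add: lifted_tf_apply scaleC_zero_right)
qed

lemma lifted_tf_periodic_multiples:
  assumes q: "q > (0::nat)" and T: "T > 0" and "\<And>t. B (t + T) = B t" "\<And>t. C (t + T) = C t"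
    "\<And>t. D (t + T) = D t" and R0: "\<And>i j. i < q * T \<Longrightarrow> j < q * T \<Longrightarrow> R i j 0 = 0"
    and ij: "i < T" "j < T"
  shows "lifted_tf (q * T) B C D z R (q * i) (q * j) = lifted_tf T B C D z (\<lambda>i j. R (q * i) (q * j)) i j"
proof
  fix x
  note B = toep_periodic_block_diag[where A = B, OF q T assms(3)]
    and C = toep_periodic_block_diag[where A = C, OF q T assms(4)]
    and toep_multiples = toep_periodic_multiples[where A = B, OF q T assms(3)]
      toep_periodic_multiples[where A = C, OF q T assms(4)]
      toep_periodic_multiples[where A = D, OF q T assms(5)]
  have inner: "(\<Sum>j'<q * T. R k j' (toep (q * T) B j' (q * j) x)) =
      (\<Sum>j'<T. R k (q * j') (toep T B j' j x))" if "k < q * T" for k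
    using that q ij R0 residue_block_diagD[OF B]
    by (subst sum_lessThan_multiples) (auto simp: toep_multiples dvd_eq_mod_eq_0)
  have "(\<Sum>k<q * T. toep (q * T) C (q * i) k (\<Sum>j'<q * T. R k j' (toep (q * T) B j' (q * j) x))) =
      (\<Sum>k<q * T. toep (q * T) C (q * i) k (\<Sum>j'<T. R k (q * j') (toep T B j' j x)))"
    by (simp add: inner)
  also have "\<dots> = (\<Sum>k<T. toep T C i k (\<Sum>j'<T. R (q * k) (q * j') (toep T B j' j x)))"
    using q ij residue_block_diagD[OF C]
    by (subst sum_lessThan_multiples) (auto simp: toep_multiples dvd_eq_mod_eq_0)
  finally have "(\<Sum>k<q * T. toep (q * T) C (q * i) k (\<Sum>j'<q * T. R k j' (toep (q * T) B j' (q * j) x))) =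
      (\<Sum>k<T. toep T C i k (\<Sum>j'<T. R (q * k) (q * j') (toep T B j' j x)))" .
  then show "lifted_tf (q * T) B C D z R (q * i) (q * j) x =
      lifted_tf T B C D z (\<lambda>i j. R (q * i) (q * j)) i j x"
    by (simp add: lifted_tf_apply toep_multiples)
qed

lemma lifted_tf_resolvent_periodic_block_diag:
  assumes q: "q > (0::nat)" and T: "T > 0" and A: "\<And>t. clinear (A t)" and C: "\<And>t. clinear (C t)"
    and A_per: "\<And>t. A (t + T) = A t" and B_per: "\<And>t. B (t + T) = B t"
    and C_per: "\<And>t. C (t + T) = C t" and D_per: "\<And>t. D (t + T) = D t"
    and z: "z \<in> rho (q * T) (toep (q * T) A)"
  shows "residue_block_diag q (q * T) (lifted_tf (q * T) B C D z (resolvent (q * T) A z))"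
proof (rule lifted_tf_block_diag)
  show "residue_block_diag q (q * T) (toep (q * T) B)"
    by (rule toep_periodic_block_diag[where A = B, OF q T B_per])
  show "residue_block_diag q (q * T) (toep (q * T) C)"
    by (rule toep_periodic_block_diag[where A = C, OF q T C_per])
  show "residue_block_diag q (q * T) (toep (q * T) D)"
    by (rule toep_periodic_block_diag[where A = D, OF q T D_per])
  show "residue_block_diag q (q * T) (resolvent (q * T) A z)"
    by (rule resolvent_periodic_block_diag[where A = A, OF q T A_per A z])
  show "resolvent (q * T) A z i j 0 = 0" if "i < q * T" "j < q * T" for i j
    using that by (intro clinear_zero is_binv_clinear[OF is_binv_resolvent[OF z]])
  show "toep (q * T) C i j 0 = 0" for i j
    by (intro clinear_zero clinear_toep C)
qed

lemma lifted_tf_resolvent_periodic_multiples: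
  assumes q: "q > (0::nat)" and T: "T > 0" and A: "\<And>t. clinear (A t)"
    and A_per: "\<And>t. A (t + T) = A t" and B_per: "\<And>t. B (t + T) = B t"
    and C_per: "\<And>t. C (t + T) = C t" and D_per: "\<And>t. D (t + T) = D t"
    and z: "z \<in> rho (q * T) (toep (q * T) A)" and ij: "i < T" "j < T"
  shows "lifted_tf (q * T) B C D z (resolvent (q * T) A z) (q * i) (q * j) =
    lifted_tf T B C D z (resolvent T A z) i j"
proof -
  have restricted: "lifted_tf T B C D z (\<lambda>i j. resolvent (q * T) A z (q * i) (q * j)) =
      lifted_tf T B C D z (resolvent T A z)"
    by (rule lifted_tf_cong) (simp add: resolvent_periodic_multiples[where A = A, OF q T A_per z])
  show ?thesis
    unfolding restricted[symmetric] using clinear_zero[OF is_binv_clinear[OF is_binv_resolvent[OF z]]] ij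
    by (intro lifted_tf_periodic_multiples[where B = B and C = C and D = D, OF q T B_per C_per D_per])
qed

lemma stacked_sum_multiples:
  fixes q T m n r l :: nat
  assumes q: "q > 0" and K: "residue_block_diag q (q * T) K"
  shows "(\<Sum>a<q * T. if a mod (q * m) = r then
            (\<Sum>b<q * T. if b mod (q * n) = q * l then K a b x else 0) else 0) =
    (if q dvd r then
       (\<Sum>i<T. if i mod m = r div q then (\<Sum>j<T. if j mod n = l then K (q * i) (q * j) x else 0) else 0)
     else 0)"
proof -
  have row_mod: "a mod q = r mod q" if "a mod (q * m) = r" for a
    using mod_mod_cancel[of q "q * m" a] that by simp
  have col_mod: "b mod q = 0" if "b mod (q * n) = q * l" for b
    using mod_mod_cancel[of q "q * n" b] that by simp
  have inner: "(\<Sum>b<q * T. if b mod (q * n) = q * l then K a b x else 0) =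
      (\<Sum>j<T. if j mod n = l then K a (q * j) x else 0)" for a
    using q by (subst sum_lessThan_multiples) (auto simp: mod_mult_mult1 dest: col_mod)
  show ?thesis
  proof (cases "q dvd r")
    case True
    then obtain r' where r: "r = q * r'" ..
    have row_dvd: "q dvd a" if "a mod (q * m) = q * r'" for a
      using row_mod[of a] that r by (simp add: dvd_eq_mod_eq_0)
    have "(\<Sum>a<q * T. if a mod (q * m) = r then (\<Sum>j<T. if j mod n = l then K a (q * j) x else 0) else 0) =
        (\<Sum>i<T. if i mod m = r' then (\<Sum>j<T. if j mod n = l then K (q * i) (q * j) x else 0) else 0)"
      using q by (subst sum_lessThan_multiples) (auto simp: r mod_mult_mult1 dest: row_dvd)
    then show ?thesis
      unfolding inner using q r by simp
  next
    case False
    have "K a b x = 0" if "a < q * T" "b < q * T" "a mod (q * m) = r" "b mod (q * n) = q * l" for a b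
    proof (rule residue_block_diagD[OF K])
      show "a mod q \<noteq> b mod q"
        using row_mod[OF that(3)] col_mod[OF that(4)] False by (simp add: dvd_eq_mod_eq_0)
    qed (use that in auto)
    then show ?thesis
      using False by (simp cong: if_cong)
  qed
qed

lemma bmult_up_right:
  assumes "\<And>k. M r k 0 = 0" and "q * l < n"
  shows "bmult n M (up q) r l x = M r (q * l) x"
proof -
  have "bmult n M (up q) r l x = (\<Sum>k<n. if k = q * l then M r k x else 0)"
    unfolding bmult_apply up_def using assms(1) by (intro sum.cong) auto
  then show ?thesis
    using assms(2) by simp
qed

lemma bmult_up_left:
  assumes "q > 0" and "r < q * p"
  shows "bmult p (up q) M r l x = (if q dvd r then M (r div q) l x else 0)"
proof -
  have "bmult p (up q) M r l x = (\<Sum>k<p. if k = r div q \<and> q dvd r then M k l x else 0)"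
    unfolding bmult_apply up_def using assms(1) by (intro sum.cong) auto
  then show ?thesis
    using assms by (simp add: sum.delta less_mult_imp_div_less mult.commute)
qed

lemma bmult_down_left:
  assumes "q * r < p"
  shows "bmult p (down q) M r l x = M (q * r) l x"
  unfolding bmult_apply down_def using assms by (simp add: if_distrib sum.delta cong: if_cong)

lemma mult_div_gcd_scaled:
  fixes q m n :: nat
  assumes "q > 0"
  shows "q * m div gcd (q * m) (q * n) = m div gcd m n"
    and "q * m * (q * n div gcd (q * m) (q * n)) = q * (m * (n div gcd m n))"
  using assms by (simp_all add: gcd_mult_distrib_nat[symmetric])

context
  fixes q mt nt T :: nat
    and A :: "nat \<Rightarrow> 'x::chilbert \<Rightarrow> 'x" and B :: "nat \<Rightarrow> 'u::chilbert \<Rightarrow> 'x"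
    and C :: "nat \<Rightarrow> 'x \<Rightarrow> 'y::chilbert" and D :: "nat \<Rightarrow> 'u \<Rightarrow> 'y"
  assumes q: "q > 0" and mt: "mt > 0" and nt: "nt > 0" and T: "T = mt * (nt div gcd mt nt)"
    and A: "\<And>t. clinear (A t)" and B: "\<And>t. clinear (B t)"
    and C: "\<And>t. clinear (C t)" and D: "\<And>t. clinear (D t)"
    and A_per: "\<And>t. A (t + T) = A t" and B_per: "\<And>t. B (t + T) = B t"
    and C_per: "\<And>t. C (t + T) = C t" and D_per: "\<And>t. D (t + T) = D t"
begin

lemma htf_upsample_entry:
  assumes z: "z \<in> rho (q * T) (toep (q * T) A)"
  shows "htf (q * mt) (q * nt) A B C D z r (q * l) x =
    (if q dvd r then htf mt nt A B C D z (r div q) l x else 0)"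
proof -
  note rates = mult_div_gcd_scaled[OF q, of mt nt, folded T]
  have T_pos: "T > 0"
    using T mt nt by (simp add: div_greater_zero_iff)
  define K where "K = lifted_tf (q * T) B C D z (resolvent (q * T) A z)"
  define c :: complex where "c = 1 / of_nat (mt div gcd mt nt)"
  have z': "z \<in> rho T (toep T A)"
    using rho_periodic_subset[where A = A, OF q T_pos A_per] z by blast
  have K_diag: "residue_block_diag q (q * T) K"
    unfolding K_def using q T_pos A C A_per B_per C_per D_per z
    by (rule lifted_tf_resolvent_periodic_block_diag)
  have K_multiples: "K (q * i) (q * j) = lifted_tf T B C D z (resolvent T A z) i j"
    if "i < T" "j < T" for i j
    unfolding K_def using q T_pos A A_per B_per C_per D_per z that
    by (rule lifted_tf_resolvent_periodic_multiples)
  have "htf (q * mt) (q * nt) A B C D z r (q * l) x = scaleC c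
      (\<Sum>a<q * T. if a mod (q * mt) = r then
        (\<Sum>b<q * T. if b mod (q * nt) = q * l then K a b x else 0) else 0)"
    unfolding htf_entry[OF rates(2)[symmetric] z B C D] rates(1) K_def c_def ..
  also have "\<dots> = scaleC c (if q dvd r then
      (\<Sum>i<T. if i mod mt = r div q then
        (\<Sum>j<T. if j mod nt = l then K (q * i) (q * j) x else 0) else 0) else 0)"
    by (simp only: stacked_sum_multiples[OF q K_diag])
  also have "\<dots> = (if q dvd r then htf mt nt A B C D z (r div q) l x else 0)"
    unfolding htf_entry[OF T z' B C D] c_def using K_multiples
    by (auto simp: scaleC_zero_right intro!: arg_cong[where f = "scaleC _"] sum.cong)
  finally show ?thesis .
qed

lemma htf_upsample:
  assumes z: "z \<in> rho (q * T) (toep (q * T) A)"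
  shows "beq (q * mt) nt (bmult (q * nt) (htf (q * mt) (q * nt) A B C D z) (up q))
    (bmult mt (up q) (htf mt nt A B C D z))"
  unfolding beq_def
proof (intro allI impI ext)
  fix r l x assume r: "r < q * mt" and l: "l < nt"
  have "bmult (q * nt) (htf (q * mt) (q * nt) A B C D z) (up q) r l x =
      htf (q * mt) (q * nt) A B C D z r (q * l) x"
    using q l mult_div_gcd_scaled(2)[OF q, of mt nt, folded T]
    by (intro bmult_up_right htf_zero[OF _ z B C D]) simp_all
  also have "\<dots> = bmult mt (up q) (htf mt nt A B C D z) r l x"
    unfolding htf_upsample_entry[OF z] bmult_up_left[OF q r] ..
  finally show "bmult (q * nt) (htf (q * mt) (q * nt) A B C D z) (up q) r l x =
      bmult mt (up q) (htf mt nt A B C D z) r l x" .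
qed

lemma htf_downsample:
  assumes z: "z \<in> rho (q * T) (toep (q * T) A)"
  shows "beq mt nt (htf mt nt A B C D z)
    (bmult (q * mt) (down q) (bmult (q * nt) (htf (q * mt) (q * nt) A B C D z) (up q)))"
  unfolding beq_def
proof (intro allI impI ext)
  fix r l x assume r: "r < mt" and l: "l < nt"
  have "bmult (q * mt) (down q) (bmult (q * nt) (htf (q * mt) (q * nt) A B C D z) (up q)) r l x =
      htf (q * mt) (q * nt) A B C D z (q * r) (q * l) x"
    using q r l htf_zero[OF mult_div_gcd_scaled(2)[OF q, of mt nt, folded T, symmetric] z B C D]
    by (simp add: bmult_down_left bmult_up_right)
  also have "\<dots> = htf mt nt A B C D z r l x"
    using q by (simp add: htf_upsample_entry[OF z])
  finally show "htf mt nt A B C D z r l x =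
      bmult (q * mt) (down q) (bmult (q * nt) (htf (q * mt) (q * nt) A B C D z) (up q)) r l x" ..
qed

end

lemma multirateD:
  assumes "multirate m n A B C D"
  shows "m > 0" "n > 0"
    and "clinear (A t)" "clinear (B t)" "clinear (C t)" "clinear (D t)"
    and "A (t + m * (n div gcd m n)) = A t" "B (t + m * (n div gcd m n)) = B t"
      "C (t + m * (n div gcd m n)) = C t" "D (t + m * (n div gcd m n)) = D t"
  using assms by (simp_all add: multirate_def Let_def bcl_imp_clinear)

lemma coarser_rates:
  fixes m n ct :: nat
  assumes m: "m > 0" and ct: "ct > 0" "ct dvd gcd m n"
  defines "q \<equiv> gcd m n div ct"
  shows "m = q * (ct * (m div gcd m n))" "n = q * (ct * (n div gcd m n))" "q > 0"
    and "gcd (ct * (m div gcd m n)) (ct * (n div gcd m n)) = ct"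
proof -
  have g: "gcd m n = q * ct"
    using ct unfolding q_def by simp
  show "m = q * (ct * (m div gcd m n))" "n = q * (ct * (n div gcd m n))"
    by (simp_all add: g[symmetric] mult.assoc[symmetric])
  show "q > 0"
    using g m by (metis gcd_pos_nat mult_eq_0_iff neq0_conv)
  have "gcd (m div gcd m n) (n div gcd m n) = 1"
    using m by (simp add: div_gcd_coprime[THEN coprime_imp_gcd_eq_1])
  then show "gcd (ct * (m div gcd m n)) (ct * (n div gcd m n)) = ct"
    by (simp add: gcd_mult_distrib_nat[symmetric])
qed

lemma htf_coarser_rates:
  assumes sys: "multirate m n A B C D" and ct: "ct > 0" "ct dvd gcd m n"
  defines "q \<equiv> gcd m n div ct" and "mt \<equiv> ct * (m div gcd m n)" and "nt \<equiv> ct * (n div gcd m n)"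
  assumes sys': "multirate mt nt A B C D"
  defines "T \<equiv> m * (n div gcd m n)" and "T' \<equiv> mt * (n div gcd m n)"
  shows "rho T (toep T A) \<subseteq> rho T' (toep T' A)"
    and "z \<in> rho T (toep T A) \<Longrightarrow>
      beq m nt (bmult n (htf m n A B C D z) (up q)) (bmult mt (up q) (htf mt nt A B C D z))"
    and "z \<in> rho T (toep T A) \<Longrightarrow>
      beq mt nt (htf mt nt A B C D z) (bmult m (down q) (bmult n (htf m n A B C D z) (up q)))"
proof -
  note rates = coarser_rates[OF multirateD(1)[OF sys] ct, folded q_def mt_def nt_def]
  note sys' = multirateD[OF sys']
  have T': "T' = mt * (nt div gcd mt nt)"
    using ct rates(4) by (simp add: T'_def nt_def)
  have T_split: "T = q * T'"
    unfolding T_def T'_def using rates(1) by (metis mult.assoc)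
  have T'_pos: "T' > 0"
    using T' sys'(1,2) by (simp add: div_greater_zero_iff)
  show "rho T (toep T A) \<subseteq> rho T' (toep T' A)"
    unfolding T_split using rates(3) T'_pos sys'(7)[folded T'] by (rule rho_periodic_subset)
  show "z \<in> rho T (toep T A) \<Longrightarrow>
      beq m nt (bmult n (htf m n A B C D z) (up q)) (bmult mt (up q) (htf mt nt A B C D z))"
    using htf_upsample[where A = A and B = B and C = C and D = D,
        OF rates(3) sys'(1,2) T' sys'(3-6) sys'(7-10)[folded T']]
    unfolding T_split by (simp add: rates(1,2)[symmetric])
  show "z \<in> rho T (toep T A) \<Longrightarrow>
      beq mt nt (htf mt nt A B C D z) (bmult m (down q) (bmult n (htf m n A B C D z) (up q)))"
    using htf_downsample[where A = A and B = B and C = C and D = D,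
        OF rates(3) sys'(1,2) T' sys'(3-6) sys'(7-10)[folded T']]
    unfolding T_split by (simp add: rates(1,2)[symmetric])
qed

theorem theorem8:
  fixes A :: "nat \<Rightarrow> 'x::{chilbert,second_countable_topology} \<Rightarrow> 'x"
    and B :: "nat \<Rightarrow> 'u::{chilbert,second_countable_topology} \<Rightarrow> 'x"
    and C :: "nat \<Rightarrow> 'x \<Rightarrow> 'y::{chilbert,second_countable_topology}"
    and D :: "nat \<Rightarrow> 'u \<Rightarrow> 'y"
    and m n :: nat
  assumes sys: "multirate m n A B C D"
  defines "c \<equiv> gcd m n"
  defines "mb \<equiv> m div c" and "nb \<equiv> n div c"
  defines "T \<equiv> m * nb"
  defines "\<epsilon> \<equiv> exp (2 * of_real pi * \<i> / of_nat T)"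
  shows "(\<forall>z\<in>rho T (toep T A). \<forall>k<m. \<forall>l<n.
            z / \<epsilon> ^ l \<in> rho T (toep T A) \<and>
            htf m n A B C D z k l = htf m n A B C D (z / \<epsilon> ^ l) (nat ((int k - int l) mod int m)) 0)
       \<and> (\<forall>ct mt nt q. ct > 0 \<and> ct dvd c \<and> q = c div ct \<and> mt = ct * mb \<and> nt = ct * nb \<and>
            multirate mt nt A B C D \<longrightarrow>
            rho T (toep T A) \<subseteq> rho (mt * nb) (toep (mt * nb) A) \<and>
            (\<forall>z\<in>rho T (toep T A).
               beq m nt (bmult n (htf m n A B C D z) (up q)) (bmult mt (up q) (htf mt nt A B C D z)) \<and>
               beq mt nt (htf mt nt A B C D z) (bmult m (down q) (bmult n (htf m n A B C D z) (up q)))))"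
proof -
  note sys_facts = multirateD[OF sys]
  have T: "T = m * (n div gcd m n)" and \<epsilon>: "\<epsilon> = unit_root T"
    unfolding T_def nb_def c_def \<epsilon>_def unit_root_def by simp_all
  have T_pos: "T > 0"
    using T sys_facts(1,2) by (simp add: div_greater_zero_iff)
  have "z / \<epsilon> ^ l \<in> rho T (toep T A) \<and>
      htf m n A B C D z k l = htf m n A B C D (z / \<epsilon> ^ l) (nat ((int k - int l) mod int m)) 0"
    if "z \<in> rho T (toep T A)" "k < m" "l < n" for z k l
    unfolding \<epsilon> using rho_rotate[OF T_pos sys_facts(3) that(1)] htf_rotate[OF sys_facts(1-6) T that] ..
  moreover have "rho T (toep T A) \<subseteq> rho (mt * nb) (toep (mt * nb) A) \<and>
      (\<forall>z\<in>rho T (toep T A).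
         beq m nt (bmult n (htf m n A B C D z) (up q)) (bmult mt (up q) (htf mt nt A B C D z)) \<and>
         beq mt nt (htf mt nt A B C D z) (bmult m (down q) (bmult n (htf m n A B C D z) (up q))))"
    if "ct > 0" "ct dvd c" "q = c div ct" "mt = ct * mb" "nt = ct * nb" "multirate mt nt A B C D"
    for ct mt nt q
    using htf_coarser_rates[OF sys, of ct] that unfolding T c_def mb_def nb_def by blast
  ultimately show ?thesis
    by blast
qed

end
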